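(* Let $n\ge 1$, let $A\in\mathbb{R}^{n\times n}$ be symmetric positive definite with rows $a_1^\top,\dots,a_n^\top$, let $b\in\mathbb{R}^n$, let $L=\lambda_{\max}(A)$ and let $\gamma>0$. For $x\in\mathbb{R}^n$ form the $n+2$ tokens (row vectors in $\mathbb{R}^{2n+1}$) $$\tilde a_i^\top=[a_i^\top\ \ e_i^\top\ \ 0]\ (i=1,\dots,n),\qquad \tilde b^\top=[0_n^\top\ \ b^\top\ \ 1],\qquad \tilde x^\top=[x^\top\ \ 0_n^\top\ \ 1],$$ where $e_i$ are the standard basis vectors of $\mathbb{R}^n$. Then there exist fixed matrices $W_Q,W_K\in\mathbb{R}^{(2n+1)\times(n+1)}$ and $W_V\in\mathbb{R}^{(2n+1)\times n}$, not depending on $A$, $b$ or $x$, such that the output of the single linear-attention head with these weights, evaluated at the $x$-token, equals $Ax+b$. Consequently, applying this head followed by a residual connection on the $x$-token with post-map $-\gamma I_n$ maps $x_k$ to $x_{k+1}=x_k-\gamma(Ax_k+b)$. Moreover, if $0<\gamma<2/L$, then for any $x_0\in\mathbb{R}^n$ the iterates $x_k$ produced by repeating this step converge linearly to $x^\star=-A^{-1}b$, the minimizer of $\tfrac12 x^\top Ax+b^\top x$.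
   Context: A single linear-attention head with weights $W_Q,W_K,W_V$ acts on a sequence of tokens $z_1,\dots,z_N$ (row vectors) by producing at token $j$ the output $o_j=\sum_{i=1}^N\langle z_jW_Q,\,z_iW_K\rangle\, z_iW_V$ (no softmax). A residual connection with post-map $P$ on a token $z$ whose first $n$ coordinates hold $x$ replaces $x$ by $x+P\,o$ where $o$ is the head output at that token. *)

theory Defs
  imports Complex_Main "Jordan_Normal_Form.Matrix" "Jordan_Normal_Form.Char_Poly"
begin

definition spd_mat :: "nat \<Rightarrow> real mat \<Rightarrow> bool" where
  "spd_mat n A \<longleftrightarrow> A \<in> carrier_mat n n \<and> transpose_mat A = A \<and>
     (\<forall>v \<in> carrier_vec n. v \<noteq> 0\<^sub>v n \<longrightarrow> v \<bullet> (A *\<^sub>v v) > 0)"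

definition lambda_max :: "real mat \<Rightarrow> real" where
  "lambda_max A = Max {l. eigenvalue A l}"

definition mat_inv :: "real mat \<Rightarrow> real mat" where
  "mat_inv A = (SOME B. inverts_mat A B \<and> inverts_mat B A)"

definition vnorm :: "real vec \<Rightarrow> real" where
  "vnorm v = sqrt (v \<bullet> v)"

definition rmul :: "real vec \<Rightarrow> real mat \<Rightarrow> real vec" where
  "rmul z W = transpose_mat W *\<^sub>v z"

definition lin_attn :: "real mat \<Rightarrow> real mat \<Rightarrow> real mat \<Rightarrow> (nat \<Rightarrow> real vec) \<Rightarrow> nat \<Rightarrow> nat \<Rightarrow> real vec" where
  "lin_attn WQ WK WV z N j =
     vec (dim_col WV) (\<lambda>k. \<Sum>i<N. (rmul (z j) WQ \<bullet> rmul (z i) WK) * (rmul (z i) WV $ k))"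

definition residual :: "nat \<Rightarrow> real mat \<Rightarrow> real vec \<Rightarrow> real vec \<Rightarrow> real vec" where
  "residual n P out z = vec (dim_vec z) (\<lambda>i. if i < n then z $ i + (P *\<^sub>v out) $ i else z $ i)"

definition tok_a :: "nat \<Rightarrow> real mat \<Rightarrow> nat \<Rightarrow> real vec" where
  "tok_a n A i = row A i @\<^sub>v unit_vec n i @\<^sub>v 0\<^sub>v 1"

definition tok_b :: "nat \<Rightarrow> real vec \<Rightarrow> real vec" where
  "tok_b n b = 0\<^sub>v n @\<^sub>v b @\<^sub>v vec 1 (\<lambda>_. 1)"

definition tok_x :: "nat \<Rightarrow> real vec \<Rightarrow> real vec" where
  "tok_x n x = x @\<^sub>v 0\<^sub>v n @\<^sub>v vec 1 (\<lambda>_. 1)"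

definition tokens :: "nat \<Rightarrow> real mat \<Rightarrow> real vec \<Rightarrow> real vec \<Rightarrow> nat \<Rightarrow> real vec" where
  "tokens n A b x j = (if j < n then tok_a n A j else if j = n then tok_b n b else tok_x n x)"

definition head_x :: "nat \<Rightarrow> real mat \<Rightarrow> real mat \<Rightarrow> real mat \<Rightarrow> real mat \<Rightarrow> real vec \<Rightarrow> real vec \<Rightarrow> real vec" where
  "head_x n WQ WK WV A b x = lin_attn WQ WK WV (tokens n A b x) (n + 2) (n + 1)"

definition layer_step :: "nat \<Rightarrow> real mat \<Rightarrow> real mat \<Rightarrow> real mat \<Rightarrow> real \<Rightarrow> real mat \<Rightarrow> real vec \<Rightarrow> real vec \<Rightarrow> real vec" where
  "layer_step n WQ WK WV \<gamma> A b x =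
     vec_first (residual n ((-\<gamma>) \<cdot>\<^sub>m 1\<^sub>m n) (head_x n WQ WK WV A b x) (tok_x n x)) n"

definition layer_iter :: "nat \<Rightarrow> real mat \<Rightarrow> real mat \<Rightarrow> real mat \<Rightarrow> real \<Rightarrow> real mat \<Rightarrow> real vec \<Rightarrow> real vec \<Rightarrow> nat \<Rightarrow> real vec" where
  "layer_iter n WQ WK WV \<gamma> A b x0 k = (layer_step n WQ WK WV \<gamma> A b ^^ k) x0"

definition quad_obj :: "real mat \<Rightarrow> real vec \<Rightarrow> real vec \<Rightarrow> real" where
  "quad_obj A b y = (1/2) * (y \<bullet> (A *\<^sub>v y)) + b \<bullet> y"

end

theory Submission
  imports Defs "HOL-Analysis.Function_Topology" "Jordan_Normal_Form.Spectral_Radius"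
begin

text \<open>
  With W_Q = W_K projecting a token onto its first n coordinates and its last one, and W_V
  onto its middle block, the x-token scores the token of a_i with a_i \<bullet> x and the b-token
  with 1, while these tokens carry the values e_i and b; so the head returns
  (\<Sum>i. (a_i \<bullet> x) e_i) + b = A x + b, and the layer is a gradient step for the quadratic
  objective. Its error x - x* evolves under the symmetric matrix I - \<gamma> A, whose norm is
  bounded by its largest absolute Rayleigh quotient max |1 - \<gamma> M| |1 - \<gamma> m|, where m > 0
  and M are the extreme Rayleigh quotients of A. Both are attained by compactness of the unit
  sphere, and a maximiser is an eigenvector, so M \<le> lambda_max A and the bound is below 1
  when \<gamma> < 2 / lambda_max A.
\<close>

section \<open>Quadratic forms\<close>

lemma scalar_prod_self_nonneg: "0 \<le> (v::real vec) \<bullet> v"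
  using conjugate_square_ge_0_vec[of v] by simp

lemma scalar_prod_self_eq_0_iff:
  "(v::real vec) \<in> carrier_vec n \<Longrightarrow> v \<bullet> v = 0 \<longleftrightarrow> v = 0\<^sub>v n"
  using conjugate_square_eq_0_vec[of v n] by simp

lemma symmetric_quad_form_swap:
  fixes A :: "real mat"
  assumes "A \<in> carrier_mat n n" "transpose_mat A = A" "x \<in> carrier_vec n" "y \<in> carrier_vec n"
  shows "y \<bullet> (A *\<^sub>v x) = x \<bullet> (A *\<^sub>v y)"
  using transpose_vec_mult_scalar[OF assms(1,3,4)] comm_scalar_prod[of "A *\<^sub>v y" n x] assms by auto

lemma symmetric_quad_form_add:
  fixes A :: "real mat"
  assumes A: "A \<in> carrier_mat n n" "transpose_mat A = A" and x: "x \<in> carrier_vec n" and y: "y \<in> carrier_vec n"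
  shows "(x + y) \<bullet> (A *\<^sub>v (x + y)) = x \<bullet> (A *\<^sub>v x) + 2 * (y \<bullet> (A *\<^sub>v x)) + y \<bullet> (A *\<^sub>v y)"
proof -
  have "(x + y) \<bullet> (A *\<^sub>v (x + y)) = x \<bullet> (A *\<^sub>v x) + x \<bullet> (A *\<^sub>v y) + y \<bullet> (A *\<^sub>v x) + y \<bullet> (A *\<^sub>v y)"
    using A x y
    by (simp add: mult_add_distrib_mat_vec add_scalar_prod_distrib[of _ n] scalar_prod_add_distrib[of _ n])
  then show ?thesis using symmetric_quad_form_swap[OF A x y] by simp
qed

lemma scalar_prod_self_add:
  fixes x y :: "real vec"
  assumes "x \<in> carrier_vec n" "y \<in> carrier_vec n"
  shows "(x + y) \<bullet> (x + y) = x \<bullet> x + 2 * (y \<bullet> x) + y \<bullet> y"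
  using symmetric_quad_form_add[of "1\<^sub>m n" n x y] assms by simp

section \<open>Rayleigh quotients\<close>

lemma compact_coordinate_unit_sphere:
  "compact (PiE UNIV (\<lambda>_. {-1..1}) \<inter> {f :: nat \<Rightarrow> real. (\<Sum>i<n. (f i)\<^sup>2) = 1})"
proof (rule compact_Int_closed)
  have "compactin (product_topology (\<lambda>_. euclideanreal) UNIV) (PiE UNIV (\<lambda>_. {-1..1::real}))"
    by (simp add: compactin_PiE)
  then show "compact (PiE (UNIV :: nat set) (\<lambda>_. {-1..1::real}))"
    by (simp add: euclidean_product_topology)
  show "closed {f :: nat \<Rightarrow> real. (\<Sum>i<n. (f i)\<^sup>2) = 1}"
    by (intro closed_Collect_eq continuous_intros continuous_on_product_coordinates)
qed

lemma quad_form_attains_max_on_unit_sphere: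
  fixes A :: "real mat"
  assumes A: "A \<in> carrier_mat n n" and "0 < n"
  shows "\<exists>u\<in>carrier_vec n. u \<bullet> u = 1 \<and>
    (\<forall>v\<in>carrier_vec n. v \<bullet> v = 1 \<longrightarrow> v \<bullet> (A *\<^sub>v v) \<le> u \<bullet> (A *\<^sub>v u))"
proof -
  \<comment> \<open>Vectors of dimension n are parametrised by functions in the compact space [-1,1]^\<nat>.\<close>
  define S where "S = (PiE UNIV (\<lambda>_. {-1..1})) \<inter> {f. (\<Sum>i<n. (f i)\<^sup>2) = (1::real)}"
  have quad_form_vec: "vec n f \<bullet> (A *\<^sub>v vec n f) = (\<Sum>i<n. f i * (\<Sum>j<n. A $$ (i,j) * f j))" for f
    using A by (auto simp: scalar_prod_def atLeast0LessThan intro!: sum.cong)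
  have norm_vec: "vec n f \<bullet> vec n f = (\<Sum>i<n. (f i)\<^sup>2)" for f :: "nat \<Rightarrow> real"
    by (simp add: scalar_prod_def atLeast0LessThan power2_eq_square)
  have compact: "compact S"
    unfolding S_def by (rule compact_coordinate_unit_sphere)
  have "(\<lambda>i. if i = 0 then 1 else 0) \<in> S"
    using \<open>0 < n\<close> by (auto simp: S_def power2_eq_square if_distrib sum.delta cong: if_cong)
  then have nonempty: "S \<noteq> {}" by auto
  have continuous: "continuous_on S (\<lambda>f. vec n f \<bullet> (A *\<^sub>v vec n f))"
    unfolding quad_form_vec
    by (intro continuous_intros continuous_on_subset[OF continuous_on_product_coordinates]) auto
  obtain f where f: "f \<in> S"
    and f_max: "\<And>g. g \<in> S \<Longrightarrow> vec n g \<bullet> (A *\<^sub>v vec n g) \<le> vec n f \<bullet> (A *\<^sub>v vec n f)"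
    using continuous_attains_sup[OF compact nonempty continuous] by blast
  show ?thesis
  proof (intro bexI conjI ballI impI)
    show "vec n f \<bullet> vec n f = 1" using f by (simp add: S_def norm_vec)
    fix v :: "real vec" assume v: "v \<in> carrier_vec n" "v \<bullet> v = 1"
    define g where "g i = (if i < n then v $ i else 0)" for i
    have v_eq: "vec n g = v"
      using v(1) by (intro eq_vecI) (auto simp: g_def)
    have g_norm: "(\<Sum>i<n. (g i)\<^sup>2) = 1"
      using v(2) norm_vec[of g] by (simp only: v_eq)
    have "\<bar>g i\<bar> \<le> 1" for i
    proof (cases "i < n")
      case True
      then have "(g i)\<^sup>2 \<le> 1"
        using member_le_sum[of i "{..<n}" "\<lambda>i. (g i)\<^sup>2"] g_norm by simp
      then show ?thesis by (simp add: abs_square_le_1)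
    qed (simp add: g_def)
    then have "g \<in> S"
      using g_norm by (simp add: S_def PiE_def abs_le_iff)
    from f_max[OF this] show "v \<bullet> (A *\<^sub>v v) \<le> vec n f \<bullet> (A *\<^sub>v vec n f)"
      by (simp only: v_eq)
  qed (rule vec_carrier)
qed

lemma rayleigh_max_attained:
  fixes A :: "real mat"
  assumes A: "A \<in> carrier_mat n n" and "0 < n"
  shows "\<exists>u\<in>carrier_vec n. u \<bullet> u = 1 \<and>
    (\<forall>v\<in>carrier_vec n. v \<bullet> (A *\<^sub>v v) \<le> (u \<bullet> (A *\<^sub>v u)) * (v \<bullet> v))"
proof -
  obtain u where u: "u \<in> carrier_vec n" "u \<bullet> u = 1"
    and u_max: "\<And>w. w \<in> carrier_vec n \<Longrightarrow> w \<bullet> w = 1 \<Longrightarrow> w \<bullet> (A *\<^sub>v w) \<le> u \<bullet> (A *\<^sub>v u)"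
    using quad_form_attains_max_on_unit_sphere[OF assms] by blast
  have "v \<bullet> (A *\<^sub>v v) \<le> (u \<bullet> (A *\<^sub>v u)) * (v \<bullet> v)" if v: "v \<in> carrier_vec n" for v
  proof (cases "v = 0\<^sub>v n")
    case True
    then show ?thesis using A by simp
  next
    case False
    define s where "s = v \<bullet> v"
    have "s > 0"
      using False scalar_prod_self_nonneg[of v] scalar_prod_self_eq_0_iff[OF v] by (auto simp: s_def)
    define w where "w = (1 / sqrt s) \<cdot>\<^sub>v v"
    have w: "w \<in> carrier_vec n" using v by (simp add: w_def)
    have "w \<bullet> w = 1"
      using v \<open>s > 0\<close> by (simp add: w_def s_def[symmetric] real_sqrt_mult[symmetric])
    moreover have "w \<bullet> (A *\<^sub>v w) = (v \<bullet> (A *\<^sub>v v)) / s"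
      using v A \<open>s > 0\<close> by (simp add: w_def mult_mat_vec real_sqrt_mult[symmetric])
    ultimately have "(v \<bullet> (A *\<^sub>v v)) / s \<le> u \<bullet> (A *\<^sub>v u)"
      using u_max[OF w] by simp
    then show ?thesis using \<open>s > 0\<close> by (simp add: s_def divide_le_eq)
  qed
  then show ?thesis using u by blast
qed

lemma rayleigh_min_attained:
  fixes A :: "real mat"
  assumes A: "A \<in> carrier_mat n n" and "0 < n"
  shows "\<exists>u\<in>carrier_vec n. u \<bullet> u = 1 \<and>
    (\<forall>v\<in>carrier_vec n. (u \<bullet> (A *\<^sub>v u)) * (v \<bullet> v) \<le> v \<bullet> (A *\<^sub>v v))"
proof -
  have "- A \<in> carrier_mat n n" using A by simp
  from rayleigh_max_attained[OF this \<open>0 < n\<close>] obtain u where "u \<in> carrier_vec n" "u \<bullet> u = 1"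
    and "\<forall>v\<in>carrier_vec n. v \<bullet> (- A *\<^sub>v v) \<le> (u \<bullet> (- A *\<^sub>v u)) * (v \<bullet> v)"
    by blast
  then show ?thesis using A by (intro bexI[of _ u]) auto
qed

lemma nonpos_if_linear_le_quadratic:
  fixes c K :: real
  assumes "\<And>t. t > 0 \<Longrightarrow> t * c \<le> t\<^sup>2 * K"
  shows "c \<le> 0"
proof (rule ccontr)
  assume "\<not> c \<le> 0"
  define t where "t = c / (\<bar>K\<bar> + 1)"
  have "t > 0" "t * \<bar>K\<bar> < c"
    using \<open>\<not> c \<le> 0\<close> by (auto simp: t_def field_simps)
  moreover have "t * K \<le> t * \<bar>K\<bar>"
    using \<open>t > 0\<close> by (intro mult_left_mono) auto
  ultimately have "t * K < c"
    by linarith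
  then have "t * (t * K) < t * c"
    using \<open>t > 0\<close> by simp
  then have "t\<^sup>2 * K < t * c"
    by (simp add: power2_eq_square mult.assoc)
  then show False using assms[OF \<open>t > 0\<close>] by simp
qed

lemma rayleigh_maximiser_eigenvector:
  fixes A :: "real mat"
  assumes A: "A \<in> carrier_mat n n" "transpose_mat A = A"
    and u: "u \<in> carrier_vec n" "u \<bullet> u = 1"
    and u_max: "\<forall>v\<in>carrier_vec n. v \<bullet> (A *\<^sub>v v) \<le> (u \<bullet> (A *\<^sub>v u)) * (v \<bullet> v)"
  shows "A *\<^sub>v u = (u \<bullet> (A *\<^sub>v u)) \<cdot>\<^sub>v u"
proof -
  define M where "M = u \<bullet> (A *\<^sub>v u)"
  define r where "r = A *\<^sub>v u - M \<cdot>\<^sub>v u"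
  have r: "r \<in> carrier_vec n" using A u by (simp add: r_def)
  have Au: "A *\<^sub>v u \<in> carrier_vec n" using A u by simp
  have r_Au: "r \<bullet> (A *\<^sub>v u) = r \<bullet> r + M * (r \<bullet> u)"
    using scalar_prod_minus_distrib[OF r Au, of "M \<cdot>\<^sub>v u"] r u by (simp add: r_def[symmetric])
  \<comment> \<open>Perturbing u in the direction r would increase the Rayleigh quotient to first order.\<close>
  have "t * (2 * (r \<bullet> r)) \<le> t\<^sup>2 * (M * (r \<bullet> r) - r \<bullet> (A *\<^sub>v r))" for t
  proof -
    have tr: "t \<cdot>\<^sub>v r \<in> carrier_vec n" using r by simp
    have "(u + t \<cdot>\<^sub>v r) \<bullet> (A *\<^sub>v (u + t \<cdot>\<^sub>v r)) \<le> M * ((u + t \<cdot>\<^sub>v r) \<bullet> (u + t \<cdot>\<^sub>v r))"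
      using u_max u r by (simp add: M_def)
    moreover have "(u + t \<cdot>\<^sub>v r) \<bullet> (A *\<^sub>v (u + t \<cdot>\<^sub>v r)) = M + 2 * t * (r \<bullet> (A *\<^sub>v u)) + t\<^sup>2 * (r \<bullet> (A *\<^sub>v r))"
      using symmetric_quad_form_add[OF A u(1) tr] A u r
      by (simp add: M_def mult_mat_vec power2_eq_square)
    moreover have "(u + t \<cdot>\<^sub>v r) \<bullet> (u + t \<cdot>\<^sub>v r) = 1 + 2 * t * (r \<bullet> u) + t\<^sup>2 * (r \<bullet> r)"
      using scalar_prod_self_add[OF u(1) tr] u r by (simp add: power2_eq_square)
    ultimately have "M + 2 * t * (r \<bullet> r + M * (r \<bullet> u)) + t\<^sup>2 * (r \<bullet> (A *\<^sub>v r))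
        \<le> M * (1 + 2 * t * (r \<bullet> u) + t\<^sup>2 * (r \<bullet> r))"
      by (simp only: r_Au)
    then show ?thesis by (simp add: algebra_simps)
  qed
  then have "2 * (r \<bullet> r) \<le> 0" by (intro nonpos_if_linear_le_quadratic)
  then have "r = 0\<^sub>v n"
    using scalar_prod_self_nonneg[of r] scalar_prod_self_eq_0_iff[OF r] by simp
  show ?thesis unfolding M_def[symmetric]
  proof (rule eq_vecI)
    fix i assume "i < dim_vec (M \<cdot>\<^sub>v u)"
    then have "i < n" using u by simp
    with \<open>r = 0\<^sub>v n\<close> have "r $ i = 0" by simp
    then show "(A *\<^sub>v u) $ i = (M \<cdot>\<^sub>v u) $ i" using \<open>i < n\<close> A u by (simp add: r_def)
  qed (use A u in simp)
qed

lemma symmetric_mat_vec_norm_le: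
  fixes B :: "real mat"
  assumes B: "B \<in> carrier_mat n n" "transpose_mat B = B" and "0 \<le> \<rho>"
    and bound: "\<forall>v\<in>carrier_vec n. \<bar>v \<bullet> (B *\<^sub>v v)\<bar> \<le> \<rho> * (v \<bullet> v)"
    and x: "x \<in> carrier_vec n"
  shows "vnorm (B *\<^sub>v x) \<le> \<rho> * vnorm x"
proof -
  define c where "c = B *\<^sub>v x"
  have c: "c \<in> carrier_vec n" using B x by (simp add: c_def)
  \<comment> \<open>Polarisation: the quadratic forms at x + t c and x - t c differ by 4 t |c|^2.\<close>
  have polar: "4 * t * (c \<bullet> c) \<le> \<rho> * (2 * (x \<bullet> x) + 2 * t\<^sup>2 * (c \<bullet> c))" for t
  proof -
    have tc: "s \<cdot>\<^sub>v c \<in> carrier_vec n" for s using c by simp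
    have quad: "(x + s \<cdot>\<^sub>v c) \<bullet> (B *\<^sub>v (x + s \<cdot>\<^sub>v c)) = x \<bullet> (B *\<^sub>v x) + 2 * s * (c \<bullet> c) + s\<^sup>2 * (c \<bullet> (B *\<^sub>v c))" for s
      using symmetric_quad_form_add[OF B x tc] B c by (simp add: c_def[symmetric] mult_mat_vec power2_eq_square)
    have norm: "(x + s \<cdot>\<^sub>v c) \<bullet> (x + s \<cdot>\<^sub>v c) = x \<bullet> x + 2 * s * (c \<bullet> x) + s\<^sup>2 * (c \<bullet> c)" for s
      using scalar_prod_self_add[OF x tc] x c by (simp add: power2_eq_square)
    have "(x + t \<cdot>\<^sub>v c) \<bullet> (B *\<^sub>v (x + t \<cdot>\<^sub>v c)) \<le> \<rho> * ((x + t \<cdot>\<^sub>v c) \<bullet> (x + t \<cdot>\<^sub>v c))"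
      "- ((x + (-t) \<cdot>\<^sub>v c) \<bullet> (B *\<^sub>v (x + (-t) \<cdot>\<^sub>v c))) \<le> \<rho> * ((x + (-t) \<cdot>\<^sub>v c) \<bullet> (x + (-t) \<cdot>\<^sub>v c))"
      using bound x tc by (auto simp: abs_le_iff)
    then show ?thesis unfolding quad norm by (simp add: algebra_simps)
  qed
  have "c \<bullet> c \<le> \<rho>\<^sup>2 * (x \<bullet> x)"
  proof (cases "\<rho> = 0")
    case True
    then show ?thesis using polar[of 1] scalar_prod_self_nonneg[of c] by simp
  next
    case False
    with \<open>0 \<le> \<rho>\<close> have "\<rho> > 0" by simp
    with polar[of "1 / \<rho>"] show ?thesis by (simp add: field_simps power2_eq_square)
  qed
  then have "sqrt (c \<bullet> c) \<le> sqrt (\<rho>\<^sup>2 * (x \<bullet> x))" by simp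
  then show ?thesis using \<open>0 \<le> \<rho>\<close> by (simp add: vnorm_def c_def real_sqrt_mult)
qed

section \<open>Gradient descent on a positive definite quadratic\<close>

lemma spd_mat_quad_form_bounds:
  assumes "spd_mat n A" and "0 < n"
  shows "\<exists>m M. 0 < m \<and> m \<le> M \<and> M \<le> lambda_max A \<and>
    (\<forall>v\<in>carrier_vec n. m * (v \<bullet> v) \<le> v \<bullet> (A *\<^sub>v v) \<and> v \<bullet> (A *\<^sub>v v) \<le> M * (v \<bullet> v))"
proof -
  have A: "A \<in> carrier_mat n n" "transpose_mat A = A"
    and pos: "\<And>v. v \<in> carrier_vec n \<Longrightarrow> v \<noteq> 0\<^sub>v n \<Longrightarrow> v \<bullet> (A *\<^sub>v v) > 0"
    using assms(1) by (auto simp: spd_mat_def)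
  obtain u where u: "u \<in> carrier_vec n" "u \<bullet> u = 1"
    and upper: "\<forall>v\<in>carrier_vec n. v \<bullet> (A *\<^sub>v v) \<le> (u \<bullet> (A *\<^sub>v u)) * (v \<bullet> v)"
    using rayleigh_max_attained[OF A(1) \<open>0 < n\<close>] by blast
  obtain w where w: "w \<in> carrier_vec n" "w \<bullet> w = 1"
    and lower: "\<forall>v\<in>carrier_vec n. (w \<bullet> (A *\<^sub>v w)) * (v \<bullet> v) \<le> v \<bullet> (A *\<^sub>v v)"
    using rayleigh_min_attained[OF A(1) \<open>0 < n\<close>] by blast
  have "w \<noteq> 0\<^sub>v n" using w by auto
  then have "0 < w \<bullet> (A *\<^sub>v w)" using pos w(1) by blast
  moreover have "w \<bullet> (A *\<^sub>v w) \<le> u \<bullet> (A *\<^sub>v u)" using upper w by auto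
  moreover have "eigenvalue A (u \<bullet> (A *\<^sub>v u))"
    using rayleigh_maximiser_eigenvector[OF A u upper] u A
    by (auto simp: eigenvalue_def eigenvector_def)
  then have "u \<bullet> (A *\<^sub>v u) \<le> lambda_max A"
    using card_finite_spectrum(1)[OF A(1)] unfolding lambda_max_def spectrum_def by (simp add: Max_ge)
  ultimately show ?thesis using upper lower by blast
qed

lemma smult_mat_mult_vec:
  fixes A :: "'a :: comm_semiring_0 mat"
  assumes "A \<in> carrier_mat m n" "v \<in> carrier_vec n"
  shows "(k \<cdot>\<^sub>m A) *\<^sub>v v = k \<cdot>\<^sub>v (A *\<^sub>v v)"
  using assms by (intro eq_vecI) (auto simp: scalar_prod_def sum_distrib_left mult.assoc)

lemma symmetric_gradient_step_norm_le:
  fixes A :: "real mat"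
  assumes A: "A \<in> carrier_mat n n" "transpose_mat A = A" and "0 \<le> \<gamma>"
    and bounds: "\<forall>v\<in>carrier_vec n. m * (v \<bullet> v) \<le> v \<bullet> (A *\<^sub>v v) \<and> v \<bullet> (A *\<^sub>v v) \<le> M * (v \<bullet> v)"
    and v: "v \<in> carrier_vec n"
  shows "vnorm (v - \<gamma> \<cdot>\<^sub>v (A *\<^sub>v v)) \<le> max \<bar>1 - \<gamma> * M\<bar> \<bar>1 - \<gamma> * m\<bar> * vnorm v"
proof -
  define \<rho> where "\<rho> = max \<bar>1 - \<gamma> * M\<bar> \<bar>1 - \<gamma> * m\<bar>"
  define B where "B = 1\<^sub>m n - \<gamma> \<cdot>\<^sub>m A"
  have A_sym: "A $$ (j, i) = A $$ (i, j)" if "i < n" "j < n" for i j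
    using A that by (metis carrier_matD index_transpose_mat(1))
  have B: "B \<in> carrier_mat n n" "transpose_mat B = B"
    using A by (auto simp: B_def A_sym intro!: eq_matI)
  have B_v: "B *\<^sub>v w = w - \<gamma> \<cdot>\<^sub>v (A *\<^sub>v w)" if "w \<in> carrier_vec n" for w
    using A that by (simp add: B_def minus_mult_distrib_mat_vec[of _ n n] smult_mat_mult_vec)
  have "\<bar>w \<bullet> (B *\<^sub>v w)\<bar> \<le> \<rho> * (w \<bullet> w)" if w: "w \<in> carrier_vec n" for w
  proof -
    have "w \<bullet> (B *\<^sub>v w) = w \<bullet> w - \<gamma> * (w \<bullet> (A *\<^sub>v w))"
      using w A by (simp add: B_v scalar_prod_minus_distrib)
    moreover have "\<gamma> * (m * (w \<bullet> w)) \<le> \<gamma> * (w \<bullet> (A *\<^sub>v w))"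
      "\<gamma> * (w \<bullet> (A *\<^sub>v w)) \<le> \<gamma> * (M * (w \<bullet> w))"
      using bounds w \<open>0 \<le> \<gamma>\<close> by (simp_all add: mult_left_mono)
    then have "(1 - \<gamma> * M) * (w \<bullet> w) \<le> w \<bullet> w - \<gamma> * (w \<bullet> (A *\<^sub>v w))"
      "w \<bullet> w - \<gamma> * (w \<bullet> (A *\<^sub>v w)) \<le> (1 - \<gamma> * m) * (w \<bullet> w)"
      by (simp_all add: algebra_simps)
    moreover have "(1 - \<gamma> * m) * (w \<bullet> w) \<le> \<rho> * (w \<bullet> w)"
      by (rule mult_right_mono) (auto simp: \<rho>_def scalar_prod_self_nonneg)
    moreover have "(- \<rho>) * (w \<bullet> w) \<le> (1 - \<gamma> * M) * (w \<bullet> w)"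
      by (rule mult_right_mono) (auto simp: \<rho>_def scalar_prod_self_nonneg)
    ultimately show ?thesis by (simp add: abs_le_iff)
  qed
  moreover have "0 \<le> \<rho>" by (simp add: \<rho>_def)
  ultimately show ?thesis
    using symmetric_mat_vec_norm_le[OF B _ _ v] B_v[OF v] by (simp add: \<rho>_def)
qed

lemma spd_mat_gradient_step_contraction:
  assumes "spd_mat n A" and "0 < n" and "0 < \<gamma>" "\<gamma> < 2 / lambda_max A"
  shows "\<exists>\<rho>. 0 \<le> \<rho> \<and> \<rho> < 1 \<and> (\<forall>v\<in>carrier_vec n. vnorm (v - \<gamma> \<cdot>\<^sub>v (A *\<^sub>v v)) \<le> \<rho> * vnorm v)"
proof -
  have A: "A \<in> carrier_mat n n" "transpose_mat A = A"
    using assms(1) by (auto simp: spd_mat_def)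
  obtain m M where "0 < m" "m \<le> M" "M \<le> lambda_max A"
    and bounds: "\<forall>v\<in>carrier_vec n. m * (v \<bullet> v) \<le> v \<bullet> (A *\<^sub>v v) \<and> v \<bullet> (A *\<^sub>v v) \<le> M * (v \<bullet> v)"
    using spd_mat_quad_form_bounds[OF assms(1,2)] by blast
  \<comment> \<open>0 < \<gamma> < 2 / L forces L > 0 (note 2 / 0 = 0).\<close>
  have "0 < lambda_max A"
  proof (rule ccontr)
    assume "\<not> 0 < lambda_max A"
    then have "2 / lambda_max A \<le> 0" by (simp add: divide_nonneg_nonpos)
    with assms(3,4) show False by simp
  qed
  then have "\<gamma> * lambda_max A < 2"
    using assms(4) by (simp add: less_divide_eq)
  moreover have "\<gamma> * M \<le> \<gamma> * lambda_max A"
    using assms(3) \<open>M \<le> lambda_max A\<close> by simp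
  moreover have "0 < \<gamma> * m" "\<gamma> * m \<le> \<gamma> * M"
    using \<open>0 < m\<close> \<open>m \<le> M\<close> assms(3) by auto
  ultimately have "max \<bar>1 - \<gamma> * M\<bar> \<bar>1 - \<gamma> * m\<bar> < 1"
    by (simp add: abs_less_iff)
  then show ?thesis
    using symmetric_gradient_step_norm_le[OF A _ bounds] assms(3)
    by (intro exI[of _ "max \<bar>1 - \<gamma> * M\<bar> \<bar>1 - \<gamma> * m\<bar>"]) auto
qed

lemma spd_mat_inv:
  assumes "spd_mat n A"
  shows "mat_inv A \<in> carrier_mat n n" "A * mat_inv A = 1\<^sub>m n"
proof -
  have A: "A \<in> carrier_mat n n"
    and pos: "\<And>v. v \<in> carrier_vec n \<Longrightarrow> v \<noteq> 0\<^sub>v n \<Longrightarrow> v \<bullet> (A *\<^sub>v v) > 0"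
    using assms by (auto simp: spd_mat_def)
  have "det A \<noteq> 0"
  proof
    assume "det A = 0"
    then obtain v where v: "v \<in> carrier_vec n" "v \<noteq> 0\<^sub>v n" "A *\<^sub>v v = 0\<^sub>v n"
      using det_0_iff_vec_prod_zero[OF A] by auto
    then have "v \<bullet> (A *\<^sub>v v) > 0" using pos by blast
    with v show False by simp
  qed
  from det_non_zero_imp_unit[OF A this, unfolded Units_def, of "()"]
  obtain B where "B \<in> carrier_mat n n" "B * A = 1\<^sub>m n" "A * B = 1\<^sub>m n"
    by (auto simp: ring_mat_def)
  then have "\<exists>B. inverts_mat A B \<and> inverts_mat B A"
    using A by (auto simp: inverts_mat_def)
  then have "inverts_mat A (mat_inv A) \<and> inverts_mat (mat_inv A) A"
    unfolding mat_inv_def by (rule someI_ex)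
  then have AC: "A * mat_inv A = 1\<^sub>m n" and CA: "mat_inv A * A = 1\<^sub>m (dim_row (mat_inv A))"
    using A by (auto simp: inverts_mat_def)
  show "A * mat_inv A = 1\<^sub>m n" by (fact AC)
  have "dim_col (mat_inv A) = n" using arg_cong[OF AC, of dim_col] by simp
  moreover have "dim_row (mat_inv A) = n" using arg_cong[OF CA, of dim_col] A by simp
  ultimately show "mat_inv A \<in> carrier_mat n n" by auto
qed

lemma spd_mat_inv_solves:
  assumes "spd_mat n A" and b: "b \<in> carrier_vec n"
  shows "- (mat_inv A *\<^sub>v b) \<in> carrier_vec n" "A *\<^sub>v (- (mat_inv A *\<^sub>v b)) = - b"
proof -
  have A: "A \<in> carrier_mat n n" using assms(1) by (simp add: spd_mat_def)
  note inv = spd_mat_inv[OF assms(1)]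
  show "- (mat_inv A *\<^sub>v b) \<in> carrier_vec n" using inv(1) b by simp
  have "A *\<^sub>v (mat_inv A *\<^sub>v b) = b"
    using assoc_mult_mat_vec[OF A inv(1) b] inv(2) b by simp
  moreover have "A *\<^sub>v (- (mat_inv A *\<^sub>v b)) = - (A *\<^sub>v (mat_inv A *\<^sub>v b))"
    using A inv(1) b by (intro eq_vecI) auto
  ultimately show "A *\<^sub>v (- (mat_inv A *\<^sub>v b)) = - b" by simp
qed

lemma quad_obj_shift:
  assumes A: "A \<in> carrier_mat n n" "transpose_mat A = A"
    and b: "b \<in> carrier_vec n" and xs: "xs \<in> carrier_vec n" "A *\<^sub>v xs = - b"
    and d: "d \<in> carrier_vec n"
  shows "quad_obj A b (xs + d) = quad_obj A b xs + (d \<bullet> (A *\<^sub>v d)) / 2"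
proof -
  have "d \<bullet> (A *\<^sub>v xs) = - (b \<bullet> d)"
    using xs d b by (simp add: comm_scalar_prod[OF b d])
  then show ?thesis
    using symmetric_quad_form_add[OF A xs(1) d] scalar_prod_add_distrib[OF b xs(1) d]
    by (simp add: quad_obj_def algebra_simps)
qed

lemma spd_quad_obj_strict_min:
  assumes "spd_mat n A" and b: "b \<in> carrier_vec n" and xs: "xs \<in> carrier_vec n" "A *\<^sub>v xs = - b"
    and y: "y \<in> carrier_vec n" "y \<noteq> xs"
  shows "quad_obj A b xs < quad_obj A b y"
proof -
  have A: "A \<in> carrier_mat n n" "transpose_mat A = A"
    and pos: "\<And>v. v \<in> carrier_vec n \<Longrightarrow> v \<noteq> 0\<^sub>v n \<Longrightarrow> v \<bullet> (A *\<^sub>v v) > 0"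
    using assms(1) by (auto simp: spd_mat_def)
  define d where "d = y - xs"
  have d: "d \<in> carrier_vec n" and y_eq: "y = xs + d"
    using xs(1) y(1) by (auto simp: d_def intro!: eq_vecI)
  then have "d \<noteq> 0\<^sub>v n" using y(2) xs(1) by auto
  then show ?thesis
    using quad_obj_shift[OF A b xs d] pos[OF d] by (simp add: y_eq)
qed

lemma funpow_contraction:
  fixes f :: "'a \<Rightarrow> 'a" and d :: "'a \<Rightarrow> real"
  assumes step: "\<And>x. x \<in> S \<Longrightarrow> f x \<in> S \<and> d (f x) \<le> \<rho> * d x" and "0 \<le> \<rho>" and "x \<in> S"
  shows "(f ^^ k) x \<in> S \<and> d ((f ^^ k) x) \<le> \<rho> ^ k * d x"
proof (induction k)
  case 0
  then show ?case using \<open>x \<in> S\<close> by simp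
next
  case (Suc k)
  then have "f ((f ^^ k) x) \<in> S" "d (f ((f ^^ k) x)) \<le> \<rho> * d ((f ^^ k) x)"
    using step by blast+
  moreover have "\<rho> * d ((f ^^ k) x) \<le> \<rho> * (\<rho> ^ k * d x)"
    using Suc \<open>0 \<le> \<rho>\<close> by (simp add: mult_left_mono)
  ultimately show ?case by simp
qed

section \<open>The attention layer\<close>

definition attn_query_key :: "nat \<Rightarrow> real mat" where
  "attn_query_key n =
     mat (2*n+1) (n+1) (\<lambda>(i, j). if (i < n \<and> j = i) \<or> (i = 2*n \<and> j = n) then 1 else 0)"

definition attn_value :: "nat \<Rightarrow> real mat" where
  "attn_value n = mat (2*n+1) n (\<lambda>(i, j). if i = n + j then 1 else 0)"

lemma dim_rmul [simp]: "dim_vec (rmul z W) = dim_col W"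
  by (simp add: rmul_def)

lemma index_rmul:
  assumes "z \<in> carrier_vec m" "W \<in> carrier_mat m c" "k < c"
  shows "rmul z W $ k = (\<Sum>i<m. W $$ (i, k) * z $ i)"
  using assms by (auto simp: rmul_def scalar_prod_def atLeast0LessThan intro!: sum.cong)

lemma rmul_attn_query_key:
  assumes "u \<in> carrier_vec n" "v \<in> carrier_vec n" "w \<in> carrier_vec 1"
  shows "rmul (u @\<^sub>v v @\<^sub>v w) (attn_query_key n) = u @\<^sub>v w"
proof (rule eq_vecI)
  define z where "z = u @\<^sub>v v @\<^sub>v w"
  have z: "z \<in> carrier_vec (2*n+1)"
    unfolding z_def mult_2 add.assoc using assms by (intro append_carrier_vec)
  fix k assume "k < dim_vec (u @\<^sub>v w)"
  then have k: "k < n + 1" using assms by simp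
  define p where "p = (if k < n then k else 2 * n)"
  have "rmul z (attn_query_key n) $ k = (\<Sum>i<2*n+1. attn_query_key n $$ (i, k) * z $ i)"
    by (rule index_rmul[OF z _ k]) (simp add: attn_query_key_def)
  also have "\<dots> = (\<Sum>i<2*n+1. if i = p then z $ i else 0)"
    using k by (intro sum.cong) (auto simp: attn_query_key_def p_def)
  also have "\<dots> = (u @\<^sub>v w) $ k"
    using assms k by (auto simp: p_def z_def)
  finally show "rmul z (attn_query_key n) $ k = (u @\<^sub>v w) $ k" .
qed (use assms in \<open>simp add: attn_query_key_def\<close>)

lemma rmul_attn_value:
  assumes "u \<in> carrier_vec n" "v \<in> carrier_vec n" "w \<in> carrier_vec 1"
  shows "rmul (u @\<^sub>v v @\<^sub>v w) (attn_value n) = v"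
proof (rule eq_vecI)
  define z where "z = u @\<^sub>v v @\<^sub>v w"
  have z: "z \<in> carrier_vec (2*n+1)"
    unfolding z_def mult_2 add.assoc using assms by (intro append_carrier_vec)
  fix k assume "k < dim_vec v"
  then have k: "k < n" using assms by simp
  have "rmul z (attn_value n) $ k = (\<Sum>i<2*n+1. attn_value n $$ (i, k) * z $ i)"
    by (rule index_rmul[OF z _ k]) (simp add: attn_value_def)
  also have "\<dots> = (\<Sum>i<2*n+1. if i = n + k then z $ i else 0)"
    using k by (intro sum.cong) (auto simp: attn_value_def)
  also have "\<dots> = v $ k"
    using assms k by (simp add: z_def)
  finally show "rmul z (attn_value n) $ k = v $ k" .
qed (use assms in \<open>simp add: attn_value_def\<close>)

lemma tokens_attn_query_key:
  assumes "A \<in> carrier_mat n n" "b \<in> carrier_vec n" "x \<in> carrier_vec n"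
  shows "i < n \<Longrightarrow> rmul (tokens n A b x i) (attn_query_key n) = row A i @\<^sub>v 0\<^sub>v 1"
    and "rmul (tokens n A b x n) (attn_query_key n) = 0\<^sub>v n @\<^sub>v vec 1 (\<lambda>_. 1)"
    and "rmul (tokens n A b x (n + 1)) (attn_query_key n) = x @\<^sub>v vec 1 (\<lambda>_. 1)"
  using assms by (simp_all add: tokens_def tok_a_def tok_b_def tok_x_def rmul_attn_query_key)

lemma tokens_attn_value:
  assumes "A \<in> carrier_mat n n" "b \<in> carrier_vec n" "x \<in> carrier_vec n"
  shows "i < n \<Longrightarrow> rmul (tokens n A b x i) (attn_value n) = unit_vec n i"
    and "rmul (tokens n A b x n) (attn_value n) = b"
    and "rmul (tokens n A b x (n + 1)) (attn_value n) = 0\<^sub>v n"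
  using assms by (simp_all add: tokens_def tok_a_def tok_b_def tok_x_def rmul_attn_value)

lemma head_x_attn_weights:
  assumes A: "A \<in> carrier_mat n n" and b: "b \<in> carrier_vec n" and x: "x \<in> carrier_vec n"
  shows "head_x n (attn_query_key n) (attn_query_key n) (attn_value n) A b x = A *\<^sub>v x + b"
proof (rule eq_vecI)
  fix k assume "k < dim_vec (A *\<^sub>v x + b)"
  then have k: "k < n" using b by simp
  let ?z = "tokens n A b x"
  note keys = tokens_attn_query_key[OF A b x] and vals = tokens_attn_value[OF A b x]
  define q where "q = rmul (?z (n + 1)) (attn_query_key n)"
  have q: "q = x @\<^sub>v vec 1 (\<lambda>_. 1)"
    unfolding q_def by (rule keys(3))
  define F where "F i = (q \<bullet> rmul (?z i) (attn_query_key n)) * (rmul (?z i) (attn_value n) $ k)" for i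
  have ones: "vec 1 (\<lambda>_. 1) \<in> carrier_vec 1" by simp
  have F_row: "F i = (if i = k then (A *\<^sub>v x) $ i else 0)" if "i < n" for i
  proof -
    have row: "row A i \<in> carrier_vec n" using A that by simp
    have "(x @\<^sub>v vec 1 (\<lambda>_. 1)) \<bullet> (row A i @\<^sub>v 0\<^sub>v 1) = x \<bullet> row A i + vec 1 (\<lambda>_. 1) \<bullet> 0\<^sub>v 1"
      by (rule scalar_prod_append) (use x row in auto)
    also have "\<dots> = (A *\<^sub>v x) $ i"
      using A x that comm_scalar_prod[OF x row] by simp
    finally show ?thesis using that k by (simp add: F_def q keys vals)
  qed
  have F_b: "F n = b $ k"
  proof -
    have "(x @\<^sub>v vec 1 (\<lambda>_. 1)) \<bullet> (0\<^sub>v n @\<^sub>v vec 1 (\<lambda>_. 1)) = x \<bullet> 0\<^sub>v n + vec 1 (\<lambda>_. 1) \<bullet> vec 1 (\<lambda>_. 1)"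
      by (rule scalar_prod_append) (use x in auto)
    also have "\<dots> = 1"
      using x by (simp add: scalar_prod_def)
    finally show ?thesis by (simp add: F_def q keys vals)
  qed
  have F_x: "F (n + 1) = 0"
    unfolding F_def vals(3) using k by simp
  have "head_x n (attn_query_key n) (attn_query_key n) (attn_value n) A b x $ k = (\<Sum>i<n + 2. F i)"
    using k by (simp add: head_x_def lin_attn_def attn_value_def F_def q_def)
  also have "\<dots> = (\<Sum>i<n. F i) + F n + F (n + 1)"
    by (simp add: numeral_2_eq_2)
  also have "(\<Sum>i<n. F i) = (\<Sum>i<n. if i = k then (A *\<^sub>v x) $ i else 0)"
    by (rule sum.cong) (simp_all add: F_row)
  also have "\<dots> + F n + F (n + 1) = (A *\<^sub>v x + b) $ k"
    using k A b F_b F_x by simp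
  finally show "head_x n (attn_query_key n) (attn_query_key n) (attn_value n) A b x $ k = (A *\<^sub>v x + b) $ k" .
qed (use A b in \<open>simp add: head_x_def lin_attn_def attn_value_def\<close>)

lemma layer_step_attn_weights:
  assumes A: "A \<in> carrier_mat n n" and b: "b \<in> carrier_vec n" and x: "x \<in> carrier_vec n"
  shows "layer_step n (attn_query_key n) (attn_query_key n) (attn_value n) \<gamma> A b x = x - \<gamma> \<cdot>\<^sub>v (A *\<^sub>v x + b)"
proof (rule eq_vecI)
  fix i assume "i < dim_vec (x - \<gamma> \<cdot>\<^sub>v (A *\<^sub>v x + b))"
  then have i: "i < n" using b by simp
  have o: "A *\<^sub>v x + b \<in> carrier_vec n" using A b x by simp
  then have "(- \<gamma> \<cdot>\<^sub>v unit_vec n i) \<bullet> (A *\<^sub>v x + b) = - \<gamma> * (A *\<^sub>v x + b) $ i"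
    using i by (simp add: smult_scalar_prod_distrib[OF unit_vec_carrier o])
  with o show "layer_step n (attn_query_key n) (attn_query_key n) (attn_value n) \<gamma> A b x $ i
      = (x - \<gamma> \<cdot>\<^sub>v (A *\<^sub>v x + b)) $ i"
    using i x b by (simp add: layer_step_def head_x_attn_weights[OF A b x] vec_first_def residual_def tok_x_def)
qed (use b in \<open>simp add: layer_step_def\<close>)

lemma layer_iter_linear_convergence:
  assumes "spd_mat n A" "0 < n" and b: "b \<in> carrier_vec n" and "0 < \<gamma>" "\<gamma> < 2 / lambda_max A"
    and xs: "xs \<in> carrier_vec n" "A *\<^sub>v xs = - b"
  shows "\<exists>\<rho>. 0 \<le> \<rho> \<and> \<rho> < 1 \<and> (\<forall>x0\<in>carrier_vec n. \<forall>k.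
    vnorm (layer_iter n (attn_query_key n) (attn_query_key n) (attn_value n) \<gamma> A b x0 k - xs)
      \<le> \<rho> ^ k * vnorm (x0 - xs))"
proof -
  have A: "A \<in> carrier_mat n n" using assms(1) by (simp add: spd_mat_def)
  obtain \<rho> where "0 \<le> \<rho>" "\<rho> < 1"
    and contract: "\<And>v. v \<in> carrier_vec n \<Longrightarrow> vnorm (v - \<gamma> \<cdot>\<^sub>v (A *\<^sub>v v)) \<le> \<rho> * vnorm v"
    using spd_mat_gradient_step_contraction[OF assms(1,2,4,5)] by blast
  let ?step = "layer_step n (attn_query_key n) (attn_query_key n) (attn_value n) \<gamma> A b"
  have "?step x \<in> carrier_vec n \<and> vnorm (?step x - xs) \<le> \<rho> * vnorm (x - xs)" if x: "x \<in> carrier_vec n" for x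
  proof -
    have "?step x - xs = (x - xs) - \<gamma> \<cdot>\<^sub>v (A *\<^sub>v (x - xs))"
      using A b xs x by (intro eq_vecI) (auto simp: layer_step_attn_weights mult_minus_distrib_mat_vec algebra_simps)
    then show ?thesis
      using contract[of "x - xs"] x xs A b by (simp add: layer_step_attn_weights)
  qed
  then show ?thesis
    using funpow_contraction[of "carrier_vec n" ?step "\<lambda>x. vnorm (x - xs)" \<rho>] \<open>0 \<le> \<rho>\<close> \<open>\<rho> < 1\<close>
    by (auto simp: layer_iter_def)
qed

theorem proposition1:
  fixes n :: nat
  assumes "n \<ge> 1"
  shows "\<exists>WQ WK WV.
    WQ \<in> carrier_mat (2*n+1) (n+1) \<and> WK \<in> carrier_mat (2*n+1) (n+1) \<and>
    WV \<in> carrier_mat (2*n+1) n \<and>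
    (\<forall>A b. spd_mat n A \<and> b \<in> carrier_vec n \<longrightarrow>
       (\<forall>x \<in> carrier_vec n. head_x n WQ WK WV A b x = A *\<^sub>v x + b) \<and>
       (\<forall>\<gamma>>0. \<forall>x \<in> carrier_vec n.
          layer_step n WQ WK WV \<gamma> A b x = x - \<gamma> \<cdot>\<^sub>v (A *\<^sub>v x + b)) \<and>
       (\<forall>\<gamma>. 0 < \<gamma> \<and> \<gamma> < 2 / lambda_max A \<longrightarrow>
          (let xs = - (mat_inv A *\<^sub>v b) in
            (\<forall>y \<in> carrier_vec n. y \<noteq> xs \<longrightarrow> quad_obj A b xs < quad_obj A b y) \<and>
            (\<exists>\<rho>. 0 \<le> \<rho> \<and> \<rho> < 1 \<and>
               (\<forall>x0 \<in> carrier_vec n. \<forall>k.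
                  vnorm (layer_iter n WQ WK WV \<gamma> A b x0 k - xs) \<le> \<rho> ^ k * vnorm (x0 - xs))))))"
proof (rule exI[of _ "attn_query_key n"], rule exI[of _ "attn_query_key n"],
    rule exI[of _ "attn_value n"], intro conjI allI impI ballI)
  show "attn_query_key n \<in> carrier_mat (2*n+1) (n+1)" by (simp add: attn_query_key_def)
  then show "attn_query_key n \<in> carrier_mat (2*n+1) (n+1)" .
  show "attn_value n \<in> carrier_mat (2*n+1) n" by (simp add: attn_value_def)
next
  fix A :: "real mat" and b x :: "real vec"
  assume "spd_mat n A \<and> b \<in> carrier_vec n" "x \<in> carrier_vec n"
  then show "head_x n (attn_query_key n) (attn_query_key n) (attn_value n) A b x = A *\<^sub>v x + b"
    by (simp add: spd_mat_def head_x_attn_weights)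
next
  fix A :: "real mat" and b x :: "real vec" and \<gamma> :: real
  assume "spd_mat n A \<and> b \<in> carrier_vec n" "x \<in> carrier_vec n"
  then show "layer_step n (attn_query_key n) (attn_query_key n) (attn_value n) \<gamma> A b x
      = x - \<gamma> \<cdot>\<^sub>v (A *\<^sub>v x + b)"
    by (simp add: spd_mat_def layer_step_attn_weights)
next
  fix A :: "real mat" and b :: "real vec" and \<gamma> :: real
  assume Ab: "spd_mat n A \<and> b \<in> carrier_vec n" and \<gamma>: "0 < \<gamma> \<and> \<gamma> < 2 / lambda_max A"
  have "0 < n" using assms by simp
  note xs = spd_mat_inv_solves[of n A b]
  show "let xs = - (mat_inv A *\<^sub>v b) in
      (\<forall>y \<in> carrier_vec n. y \<noteq> xs \<longrightarrow> quad_obj A b xs < quad_obj A b y) \<and>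
      (\<exists>\<rho>. 0 \<le> \<rho> \<and> \<rho> < 1 \<and> (\<forall>x0 \<in> carrier_vec n. \<forall>k.
         vnorm (layer_iter n (attn_query_key n) (attn_query_key n) (attn_value n) \<gamma> A b x0 k - xs)
           \<le> \<rho> ^ k * vnorm (x0 - xs)))"
    using Ab \<gamma> xs spd_quad_obj_strict_min[of n A b] layer_iter_linear_convergence[OF _ \<open>0 < n\<close>]
    by (simp add: Let_def)
qed

end
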